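(* The algebras $\mathcal{A}$ and $T$ coincide. In particular, $\{M^{t,p}_{i,j}\mid (i,j,t,p)\in\mathcal{I}_m\}$ is a basis of $T$, and $T$ equals the centralizer algebra of the stabilizer $\mathrm{Aut}_{x_0}(O_{m+1})$, i.e. the algebra of complex $X\times X$ matrices invariant under simultaneously permuting rows and columns by elements of $\mathrm{Aut}_{x_0}(O_{m+1})$.
   Context: Let $m$ be a positive integer, $S=\{1,\ldots,2m+1\}$, $X$ the set of $m$-subsets of $S$, and $O_{m+1}$ the Odd graph on $X$ (adjacency = disjointness), with distance function $\partial$ and diameter $m$. Let $x_0=\{1,\ldots,m\}$ and $\mathrm{Aut}_{x_0}(O_{m+1})$ the stabilizer of $x_0$ in the automorphism group. $A_1$ is the adjacency matrix; $E^*_i$ ($0\leq i\leq m$) is the diagonal $X\times X$ matrix with $(y,y)$-entry $1$ if $\partial(x_0,y)=i$, else $0$. The Terwilliger algebra $T$ is the subalgebra of complex $X\times X$ matrices generated by $A_1,E^*_0,\ldots,E^*_m$. For $(x,y,z)\in X^3$ let $\partial(x,y,z):=(|x\cap y|,|x\cap z|,|y\cap z|,|x\cap y\cap z|)$, and $\mathcal{I}_m$ the set of four-tuples realized as some $\partial(x,y,z)$. For $(i,j,t,p)\in\mathcal{I}_m$, $M^{t,p}_{i,j}$ is the $0/1$ matrix with $(x,y)$-entry $1$ iff $\partial(x_0,x,y)=(i,j,t,p)$. $\mathcal{A}$ is the complex linear span of $\{M^{t,p}_{i,j}:(i,j,t,p)\in\mathcal{I}_m\}$. *)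

theory Defs
  imports Complex_Main
begin

text \<open>Matrices indexed by the vertex set X are represented as functions
  nat set => nat set => complex which vanish outside X x X.\<close>

type_synonym mat = "nat set \<Rightarrow> nat set \<Rightarrow> complex"

definition ground :: "nat \<Rightarrow> nat set" where
  "ground m = {1..2*m+1}"

definition verts :: "nat \<Rightarrow> nat set set" where
  "verts m = {x. x \<subseteq> ground m \<and> card x = m}"

definition base :: "nat \<Rightarrow> nat set" where
  "base m = {1..m}"

definition adj :: "nat \<Rightarrow> nat set \<Rightarrow> nat set \<Rightarrow> bool" where
  "adj m x y \<longleftrightarrow> x \<in> verts m \<and> y \<in> verts m \<and> x \<inter> y = {}"

inductive walk :: "nat \<Rightarrow> nat \<Rightarrow> nat set \<Rightarrow> nat set \<Rightarrow> bool" for m where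
  walk0: "x \<in> verts m \<Longrightarrow> walk m 0 x x"
| walkS: "walk m k x y \<Longrightarrow> adj m y z \<Longrightarrow> walk m (Suc k) x z"

text \<open>Graph distance in the Odd graph (which is connected).\<close>
definition gdist :: "nat \<Rightarrow> nat set \<Rightarrow> nat set \<Rightarrow> nat" where
  "gdist m x y = (LEAST k. walk m k x y)"

definition is_mat :: "nat \<Rightarrow> mat \<Rightarrow> bool" where
  "is_mat m M \<longleftrightarrow> (\<forall>x y. (x \<notin> verts m \<or> y \<notin> verts m) \<longrightarrow> M x y = 0)"

definition mmul :: "nat \<Rightarrow> mat \<Rightarrow> mat \<Rightarrow> mat" where
  "mmul m A B = (\<lambda>x y. \<Sum>z\<in>verts m. A x z * B z y)"

definition A1 :: "nat \<Rightarrow> mat" where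
  "A1 m = (\<lambda>x y. if adj m x y then 1 else 0)"

definition Estar :: "nat \<Rightarrow> nat \<Rightarrow> mat" where
  "Estar m i = (\<lambda>x y. if x = y \<and> x \<in> verts m \<and> gdist m (base m) x = i then 1 else 0)"

inductive_set terw :: "nat \<Rightarrow> mat set" for m where
  gen_A: "A1 m \<in> terw m"
| gen_E: "i \<le> m \<Longrightarrow> Estar m i \<in> terw m"
| add: "M \<in> terw m \<Longrightarrow> N \<in> terw m \<Longrightarrow> (\<lambda>x y. M x y + N x y) \<in> terw m"
| smul: "M \<in> terw m \<Longrightarrow> (\<lambda>x y. c * M x y) \<in> terw m"
| mul: "M \<in> terw m \<Longrightarrow> N \<in> terw m \<Longrightarrow> mmul m M N \<in> terw m"

definition tdist :: "nat set \<Rightarrow> nat set \<Rightarrow> nat set \<Rightarrow> nat \<times> nat \<times> nat \<times> nat" where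
  "tdist x y z = (card (x \<inter> y), card (x \<inter> z), card (y \<inter> z), card (x \<inter> y \<inter> z))"

definition Iset :: "nat \<Rightarrow> (nat \<times> nat \<times> nat \<times> nat) set" where
  "Iset m = {tdist x y z | x y z. x \<in> verts m \<and> y \<in> verts m \<and> z \<in> verts m}"

text \<open>Mq m (i,j,t,p) is the matrix M^{t,p}_{i,j}.\<close>
definition Mq :: "nat \<Rightarrow> nat \<times> nat \<times> nat \<times> nat \<Rightarrow> mat" where
  "Mq m q = (\<lambda>x y. if x \<in> verts m \<and> y \<in> verts m \<and> tdist (base m) x y = q then 1 else 0)"

definition Aspan :: "nat \<Rightarrow> mat set" where
  "Aspan m = {(\<lambda>x y. \<Sum>q\<in>Iset m. c q * Mq m q x y) | c. True}"

definition Mq_indep :: "nat \<Rightarrow> bool" where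
  "Mq_indep m \<longleftrightarrow> (\<forall>c. (\<lambda>x y. \<Sum>q\<in>Iset m. c q * Mq m q x y) = (\<lambda>x y. 0)
                        \<longrightarrow> (\<forall>q\<in>Iset m. c q = 0))"

definition is_aut :: "nat \<Rightarrow> (nat set \<Rightarrow> nat set) \<Rightarrow> bool" where
  "is_aut m \<sigma> \<longleftrightarrow> bij_betw \<sigma> (verts m) (verts m)
      \<and> (\<forall>x\<in>verts m. \<forall>y\<in>verts m. adj m x y \<longleftrightarrow> adj m (\<sigma> x) (\<sigma> y))"

definition stab :: "nat \<Rightarrow> (nat set \<Rightarrow> nat set) set" where
  "stab m = {\<sigma>. is_aut m \<sigma> \<and> \<sigma> (base m) = base m}"

definition centralizer :: "nat \<Rightarrow> mat set" where
  "centralizer m = {M. is_mat m M \<and>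
      (\<forall>\<sigma>\<in>stab m. \<forall>x\<in>verts m. \<forall>y\<in>verts m. M (\<sigma> x) (\<sigma> y) = M x y)}"

end

theory Submission
  imports Defs "HOL-Library.Complex_Order"
begin

text \<open>Write \<open>B = x\<^sub>0\<close>. A permutation of the ground set fixing \<open>B\<close> induces an automorphism
  in the stabilizer, and the Venn-region sizes of \<open>(B, x, y)\<close> are determined by \<open>\<partial>(B,x,y)\<close>;
  so the stabilizer is transitive on each class \<open>{(x,y). \<partial>(B,x,y) = q}\<close>, and the
  centralizer is spanned by the linearly independent class matrices \<open>M\<^sup>t\<^sup>,\<^sup>p\<^sub>i\<^sub>,\<^sub>j\<close>. It contains
  \<open>T\<close> because the generators are invariant.

  Conversely, \<open>\<partial>(B,x) = min (2(m - |B\<inter>x|)) (2|B\<inter>x| + 1)\<close>, so the projections onto the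
  levels \<open>|B\<inter>x| = a\<close> lie in \<open>T\<close>, and with them the matrices of two-step walks through
  prescribed levels. Exchanging one point of \<open>y\<close> for one of \<open>x - y\<close> yields a \<open>w\<close> at distance
  two from \<open>y\<close> with one more point in common with \<open>x\<close>. Hence the class matrix of \<open>\<partial>(B,x,y)\<close>
  occurs in the product of the class matrix of \<open>\<partial>(B,x,w)\<close> with a two-step walk matrix, and
  every other class in the support of that product overlaps more. By induction on the overlap
  defect, starting from the classes of maximal overlap (obtained in the same way from the level
  projections), every class matrix lies in \<open>T\<close>.\<close>

section \<open>Counting arguments on finite sets\<close>

lemma card_filter_not_conj:
  assumes "finite W"
  shows "card {z\<in>W. \<not> R z \<and> Q z} = card {z\<in>W. Q z} - card {z\<in>W. R z \<and> Q z}"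
proof -
  have "{z\<in>W. \<not> R z \<and> Q z} = {z\<in>W. Q z} - {z\<in>W. R z \<and> Q z}" by auto
  moreover have "{z\<in>W. R z \<and> Q z} \<subseteq> {z\<in>W. Q z}" by auto
  ultimately show ?thesis using assms by (simp add: card_Diff_subset)
qed

lemma card_filter_eq_by_value:
  assumes "finite U" "finite V" "card {z\<in>U. Q z} = card {z\<in>V. Q' z}"
    "card {z\<in>U. R z \<and> Q z} = card {z\<in>V. R' z \<and> Q' z}"
  shows "card {z\<in>U. R z = e \<and> Q z} = card {z\<in>V. R' z = e \<and> Q' z}"
  using assms by (cases e) (simp_all add: card_filter_not_conj)

text \<open>Inclusion-exclusion: the sizes of the eight truth-pattern classes of three predicates are
  determined by the sizes of the classes of all their conjunctions.\<close>

lemma card_filter_pattern3_eq: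
  assumes "finite U" "finite V"
    "card U = card V"
    "card {z\<in>U. P1 z} = card {z\<in>V. Q1 z}"
    "card {z\<in>U. P2 z} = card {z\<in>V. Q2 z}"
    "card {z\<in>U. P3 z} = card {z\<in>V. Q3 z}"
    "card {z\<in>U. P1 z \<and> P2 z} = card {z\<in>V. Q1 z \<and> Q2 z}"
    "card {z\<in>U. P1 z \<and> P3 z} = card {z\<in>V. Q1 z \<and> Q3 z}"
    "card {z\<in>U. P2 z \<and> P3 z} = card {z\<in>V. Q2 z \<and> Q3 z}"
    "card {z\<in>U. P1 z \<and> P2 z \<and> P3 z} = card {z\<in>V. Q1 z \<and> Q2 z \<and> Q3 z}"
  shows "card {z\<in>U. P1 z = e1 \<and> P2 z = e2 \<and> P3 z = e3}
       = card {z\<in>V. Q1 z = e1 \<and> Q2 z = e2 \<and> Q3 z = e3}"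
proof -
  note E = card_filter_eq_by_value[OF assms(1,2)]
  have c0: "card {z\<in>U. True} = card {z\<in>V. True}" using assms(3) by simp
  have a3: "card {z\<in>U. P3 z = e3 \<and> True} = card {z\<in>V. Q3 z = e3 \<and> True}"
    by (rule E) (use c0 assms(6) in simp_all)
  have a13: "card {z\<in>U. P1 z \<and> (P3 z = e3 \<and> True)} = card {z\<in>V. Q1 z \<and> (Q3 z = e3 \<and> True)}"
  proof -
    have "card {z\<in>U. P3 z = e3 \<and> P1 z} = card {z\<in>V. Q3 z = e3 \<and> Q1 z}"
      by (rule E) (use assms(4,8) in \<open>simp_all add: conj_commute\<close>)
    then show ?thesis by (simp add: conj_commute)
  qed
  have a23: "card {z\<in>U. P2 z \<and> (P3 z = e3 \<and> True)} = card {z\<in>V. Q2 z \<and> (Q3 z = e3 \<and> True)}"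
  proof -
    have "card {z\<in>U. P3 z = e3 \<and> P2 z} = card {z\<in>V. Q3 z = e3 \<and> Q2 z}"
      by (rule E) (use assms(5,9) in \<open>simp_all add: conj_commute\<close>)
    then show ?thesis by (simp add: conj_commute)
  qed
  have a123: "card {z\<in>U. P2 z \<and> (P1 z \<and> (P3 z = e3 \<and> True))}
      = card {z\<in>V. Q2 z \<and> (Q1 z \<and> (Q3 z = e3 \<and> True))}"
  proof -
    have "card {z\<in>U. P3 z = e3 \<and> (P1 z \<and> P2 z)} = card {z\<in>V. Q3 z = e3 \<and> (Q1 z \<and> Q2 z)}"
      by (rule E) (use assms(7,10) in \<open>simp_all add: conj_commute conj_left_commute\<close>)
    then show ?thesis by (simp add: conj_commute conj_left_commute)
  qed
  have b23: "card {z\<in>U. P2 z = e2 \<and> (P3 z = e3 \<and> True)} = card {z\<in>V. Q2 z = e2 \<and> (Q3 z = e3 \<and> True)}"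
    by (rule E[OF a3 a23])
  have b123: "card {z\<in>U. P2 z = e2 \<and> (P1 z \<and> (P3 z = e3 \<and> True))}
      = card {z\<in>V. Q2 z = e2 \<and> (Q1 z \<and> (Q3 z = e3 \<and> True))}"
    by (rule E[OF a13 a123])
  have "card {z\<in>U. P1 z = e1 \<and> (P2 z = e2 \<and> (P3 z = e3 \<and> True))}
      = card {z\<in>V. Q1 z = e1 \<and> (Q2 z = e2 \<and> (Q3 z = e3 \<and> True))}"
  proof (rule E[OF b23])
    show "card {z\<in>U. P1 z \<and> P2 z = e2 \<and> P3 z = e3 \<and> True} = card {z\<in>V. Q1 z \<and> Q2 z = e2 \<and> Q3 z = e3 \<and> True}"
      using b123 by (simp add: conj_commute conj_left_commute)
  qed
  then show ?thesis by simp
qed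

lemma bij_betw_relabel_fibres:
  assumes "finite U" "\<And>k. card {z\<in>U. f z = k} = card {z\<in>U. g z = k}"
  shows "\<exists>\<pi>. bij_betw \<pi> U U \<and> (\<forall>z\<in>U. g (\<pi> z) = f z)"
proof -
  have "\<forall>k. \<exists>h. bij_betw h {z\<in>U. f z = k} {z\<in>U. g z = k}"
    using assms by (metis (no_types, lifting) finite_same_card_bij mem_Collect_eq finite_subset subsetI)
  then obtain h where h: "\<And>k. bij_betw (h k) {z\<in>U. f z = k} {z\<in>U. g z = k}" by metis
  define \<pi> where "\<pi> z = h (f z) z" for z
  have maps: "\<pi> z \<in> U \<and> g (\<pi> z) = f z" if "z \<in> U" for z
    using h[of "f z"] that unfolding \<pi>_def bij_betw_def by auto
  have inj: "inj_on \<pi> U"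
  proof (rule inj_onI)
    fix a b assume ab: "a \<in> U" "b \<in> U" "\<pi> a = \<pi> b"
    then have "f a = f b" using maps by metis
    then show "a = b" using h[of "f a"] ab unfolding \<pi>_def bij_betw_def inj_on_def by auto
  qed
  have "\<pi> ` U = U" using endo_inj_surj[OF assms(1) _ inj] maps by auto
  then show ?thesis using inj maps unfolding bij_betw_def by blast
qed

lemma bij_betw_image_eq_by_membership:
  assumes "bij_betw \<pi> U U" "X \<subseteq> U" "X' \<subseteq> U" "\<And>z. z \<in> U \<Longrightarrow> \<pi> z \<in> X' \<longleftrightarrow> z \<in> X"
  shows "\<pi> ` X = X'"
proof
  show "\<pi> ` X \<subseteq> X'" using assms by auto
  show "X' \<subseteq> \<pi> ` X"
  proof
    fix w assume w: "w \<in> X'"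
    then obtain z where "z \<in> U" "w = \<pi> z" using assms(1,3) unfolding bij_betw_def by auto
    then show "w \<in> \<pi> ` X" using assms(4) w by auto
  qed
qed

lemma finite_ground [simp]: "finite (ground m)"
  by (simp add: ground_def)

lemma card_ground [simp]: "card (ground m) = 2*m+1"
  by (simp add: ground_def)

lemma base_subset_ground: "base m \<subseteq> ground m"
  by (auto simp: base_def ground_def)

lemma finite_base [simp]: "finite (base m)"
  by (simp add: base_def)

lemma card_base [simp]: "card (base m) = m"
  by (simp add: base_def)

lemma card_ground_diff_base: "card (ground m - base m) = m + 1"
  using card_Diff_subset[OF finite_base base_subset_ground] by simp

lemma vertsD: "x \<in> verts m \<Longrightarrow> x \<subseteq> ground m \<and> card x = m \<and> finite x"
  by (auto simp: verts_def intro: finite_subset)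

lemma base_in_verts: "base m \<in> verts m"
  using base_subset_ground by (simp add: verts_def)

lemma finite_verts [simp]: "finite (verts m)"
  by (rule finite_subset[of _ "Pow (ground m)"]) (auto simp: verts_def)

section \<open>The stabilizer is transitive on each class\<close>

lemma image_in_verts:
  assumes "bij_betw \<pi> (ground m) (ground m)" "x \<in> verts m"
  shows "\<pi> ` x \<in> verts m"
proof -
  have "inj_on \<pi> x" using assms vertsD bij_betw_imp_inj_on inj_on_subset by metis
  then show ?thesis using assms vertsD[OF assms(2)] unfolding verts_def bij_betw_def
    by (auto simp: card_image)
qed

lemma image_Int_of_bij:
  assumes "bij_betw \<pi> (ground m) (ground m)" "x \<subseteq> ground m" "y \<subseteq> ground m"
  shows "\<pi> ` x \<inter> \<pi> ` y = \<pi> ` (x \<inter> y)"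
  using assms by (metis bij_betw_imp_inj_on inj_on_image_Int)

lemma card_image_of_bij:
  assumes "bij_betw \<pi> (ground m) (ground m)" "x \<subseteq> ground m"
  shows "card (\<pi> ` x) = card x"
  using assms by (meson bij_betw_imp_inj_on card_image inj_on_subset)

lemma is_aut_image:
  assumes "bij_betw \<pi> (ground m) (ground m)"
  shows "is_aut m ((`) \<pi>)"
proof -
  have inj: "inj_on ((`) \<pi>) (verts m)"
  proof (rule inj_onI)
    fix x y assume "x \<in> verts m" "y \<in> verts m" "\<pi> ` x = \<pi> ` y"
    then show "x = y" using assms vertsD by (metis bij_betw_imp_inj_on inj_on_image_eq_iff)
  qed
  have "(`) \<pi> ` verts m = verts m"
    using endo_inj_surj[OF finite_verts _ inj] image_in_verts[OF assms] by blast
  then have "bij_betw ((`) \<pi>) (verts m) (verts m)" using inj by (simp add: bij_betw_def)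
  moreover have "adj m x y \<longleftrightarrow> adj m (\<pi> ` x) (\<pi> ` y)" if "x \<in> verts m" "y \<in> verts m" for x y
    using that image_in_verts[OF assms] image_Int_of_bij[OF assms] vertsD unfolding adj_def by auto
  ultimately show ?thesis by (simp add: is_aut_def)
qed

lemma tdist_image:
  assumes "bij_betw \<pi> (ground m) (ground m)" "x \<subseteq> ground m" "y \<subseteq> ground m" "z \<subseteq> ground m"
  shows "tdist (\<pi> ` x) (\<pi> ` y) (\<pi> ` z) = tdist x y z"
  using assms unfolding tdist_def
  by (simp add: image_Int_of_bij card_image_of_bij Int_assoc le_infI2 le_infI1)

lemma stab_transitive_on_tdist:
  assumes "x \<in> verts m" "y \<in> verts m" "x' \<in> verts m" "y' \<in> verts m"
    "tdist (base m) x y = tdist (base m) x' y'"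
  shows "\<exists>\<sigma>\<in>stab m. \<sigma> x = x' \<and> \<sigma> y = y'"
proof -
  let ?G = "ground m" and ?B = "base m"
  have sub: "x \<subseteq> ?G" "y \<subseteq> ?G" "x' \<subseteq> ?G" "y' \<subseteq> ?G" "?B \<subseteq> ?G"
    using assms vertsD base_subset_ground by auto
  have card: "card x = m" "card y = m" "card x' = m" "card y' = m" using assms vertsD by auto
  have meets: "card (?B \<inter> x) = card (?B \<inter> x')" "card (?B \<inter> y) = card (?B \<inter> y')"
     "card (x \<inter> y) = card (x' \<inter> y')" "card (?B \<inter> x \<inter> y) = card (?B \<inter> x' \<inter> y')"
    using assms(5) by (auto simp: tdist_def)
  have filter1: "A \<subseteq> ?G \<Longrightarrow> {z\<in>?G. z \<in> A} = A" for A by auto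
  have filter2: "A \<subseteq> ?G \<Longrightarrow> {z\<in>?G. z \<in> A \<and> z \<in> C} = A \<inter> C" for A C by auto
  have filter3: "A \<subseteq> ?G \<Longrightarrow> {z\<in>?G. z \<in> A \<and> z \<in> C \<and> z \<in> D} = A \<inter> C \<inter> D" for A C D by auto
  have fibres: "card {z\<in>?G. (z\<in>?B, z\<in>x, z\<in>y) = k} = card {z\<in>?G. (z\<in>?B, z\<in>x', z\<in>y') = k}" for k
  proof -
    obtain e1 e2 e3 where k: "k = (e1, e2, e3)" by (cases k) auto
    show ?thesis unfolding k prod.inject
      by (rule card_filter_pattern3_eq)
        (use sub card meets in \<open>simp_all add: filter1 filter2 filter3\<close>)
  qed
  obtain \<pi> where \<pi>: "bij_betw \<pi> ?G ?G"
      "\<forall>z\<in>?G. (\<pi> z\<in>?B, \<pi> z\<in>x', \<pi> z\<in>y') = (z\<in>?B, z\<in>x, z\<in>y)"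
    using bij_betw_relabel_fibres[OF finite_ground fibres] by blast
  have "\<pi> ` ?B = ?B" by (rule bij_betw_image_eq_by_membership[OF \<pi>(1)]) (use sub \<pi>(2) in auto)
  moreover have "\<pi> ` x = x'" by (rule bij_betw_image_eq_by_membership[OF \<pi>(1)]) (use sub \<pi>(2) in auto)
  moreover have "\<pi> ` y = y'" by (rule bij_betw_image_eq_by_membership[OF \<pi>(1)]) (use sub \<pi>(2) in auto)
  ultimately show ?thesis using is_aut_image[OF \<pi>(1)] unfolding stab_def by auto
qed

lemma tdist_realized_at_base:
  assumes "x \<in> verts m" "y \<in> verts m" "z \<in> verts m"
  shows "\<exists>y' z'. y' \<in> verts m \<and> z' \<in> verts m \<and> tdist (base m) y' z' = tdist x y z"
proof -
  let ?G = "ground m" and ?B = "base m"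
  have sub: "x \<subseteq> ?G" "?B \<subseteq> ?G" "y \<subseteq> ?G" "z \<subseteq> ?G" using assms vertsD base_subset_ground by auto
  have fibres: "card {u\<in>?G. (u\<in>x) = k} = card {u\<in>?G. (u\<in>?B) = k}" for k
  proof (cases k)
    case True
    then have "{u\<in>?G. (u\<in>x) = k} = x" "{u\<in>?G. (u\<in>?B) = k} = ?B" using sub by auto
    then show ?thesis using assms vertsD by simp
  next
    case False
    then have "{u\<in>?G. (u\<in>x) = k} = ?G - x" "{u\<in>?G. (u\<in>?B) = k} = ?G - ?B" by auto
    then show ?thesis using sub assms vertsD by (simp add: card_Diff_subset)
  qed
  obtain \<pi> where \<pi>: "bij_betw \<pi> ?G ?G" "\<forall>u\<in>?G. (\<pi> u\<in>?B) = (u\<in>x)"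
    using bij_betw_relabel_fibres[OF finite_ground fibres] by blast
  have "\<pi> ` x = ?B" by (rule bij_betw_image_eq_by_membership[OF \<pi>(1)]) (use sub \<pi>(2) in auto)
  then show ?thesis using image_in_verts[OF \<pi>(1)] assms tdist_image[OF \<pi>(1) sub(1) sub(3) sub(4)]
    by metis
qed

section \<open>The Terwilliger algebra lies in the centralizer\<close>

lemma walk_image_aut:
  assumes "is_aut m \<sigma>" "walk m k x y"
  shows "walk m k (\<sigma> x) (\<sigma> y)"
  using assms(2)
proof (induction rule: walk.induct)
  case (walk0 x)
  then show ?case by (metis assms(1) bij_betwE is_aut_def walk.walk0)
next
  case (walkS k x y z)
  then have "adj m (\<sigma> y) (\<sigma> z)" using assms(1) by (auto simp: is_aut_def adj_def)
  then show ?case using walkS walk.walkS by blast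
qed

lemma is_aut_inv_into:
  assumes "is_aut m \<sigma>"
  shows "is_aut m (inv_into (verts m) \<sigma>)"
proof -
  let ?t = "inv_into (verts m) \<sigma>"
  have b: "bij_betw \<sigma> (verts m) (verts m)" using assms is_aut_def by blast
  have b': "bij_betw ?t (verts m) (verts m)" using bij_betw_inv_into[OF b] .
  have "adj m x y \<longleftrightarrow> adj m (?t x) (?t y)" if "x \<in> verts m" "y \<in> verts m" for x y
  proof -
    have "?t x \<in> verts m" "?t y \<in> verts m" using b' that bij_betwE by blast+
    moreover have "\<sigma> (?t x) = x" "\<sigma> (?t y) = y" using b that bij_betw_inv_into_right by metis+
    ultimately show ?thesis using assms unfolding is_aut_def by metis
  qed
  then show ?thesis using b' is_aut_def by blast
qed

lemma stab_bij: "\<sigma> \<in> stab m \<Longrightarrow> bij_betw \<sigma> (verts m) (verts m)"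
  by (auto simp: stab_def is_aut_def)

lemma gdist_base_stab:
  assumes "\<sigma> \<in> stab m" "x \<in> verts m"
  shows "gdist m (base m) (\<sigma> x) = gdist m (base m) x"
proof -
  have a: "is_aut m \<sigma>" and fix_base: "\<sigma> (base m) = base m" using assms(1) stab_def by auto
  let ?t = "inv_into (verts m) \<sigma>"
  have "?t (\<sigma> x) = x" "?t (base m) = base m"
    using stab_bij[OF assms(1)] assms(2) base_in_verts fix_base bij_betw_inv_into_left by metis+
  then have "walk m k (base m) (\<sigma> x) \<longleftrightarrow> walk m k (base m) x" for k
    using walk_image_aut[OF a, of k "base m" x] walk_image_aut[OF is_aut_inv_into[OF a], of k "base m" "\<sigma> x"]
      fix_base by auto
  then show ?thesis unfolding gdist_def by simp
qed

lemma terw_is_mat: "M \<in> terw m \<Longrightarrow> is_mat m M"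
  by (induction rule: terw.induct) (auto simp: is_mat_def A1_def adj_def Estar_def mmul_def)

lemma terw_stab_invariant:
  assumes "M \<in> terw m" "\<sigma> \<in> stab m" "x \<in> verts m" "y \<in> verts m"
  shows "M (\<sigma> x) (\<sigma> y) = M x y"
  using assms
proof (induction arbitrary: x y rule: terw.induct)
  case gen_A
  have "\<sigma> x \<in> verts m" "\<sigma> y \<in> verts m" using gen_A stab_bij bij_betwE by blast+
  then show ?case using gen_A by (auto simp: A1_def stab_def is_aut_def)
next
  case (gen_E i)
  have "\<sigma> x \<in> verts m" "\<sigma> y \<in> verts m" using gen_E stab_bij bij_betwE by blast+
  moreover have "\<sigma> x = \<sigma> y \<longleftrightarrow> x = y"
    using gen_E stab_bij bij_betw_imp_inj_on inj_on_eq_iff by metis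
  ultimately show ?case using gen_E gdist_base_stab by (auto simp: Estar_def)
next
  case (mul M N)
  have b: "bij_betw \<sigma> (verts m) (verts m)" using mul stab_bij by blast
  have "mmul m M N (\<sigma> x) (\<sigma> y) = (\<Sum>z\<in>verts m. M (\<sigma> x) (\<sigma> z) * N (\<sigma> z) (\<sigma> y))"
    unfolding mmul_def using sum.reindex_bij_betw[OF b, of "\<lambda>z. M (\<sigma> x) z * N z (\<sigma> y)"] by simp
  also have "\<dots> = mmul m M N x y" unfolding mmul_def using mul by (intro sum.cong) auto
  finally show ?case .
qed simp_all

lemma terw_subset_centralizer: "terw m \<subseteq> centralizer m"
  using terw_is_mat terw_stab_invariant unfolding centralizer_def by blast

section \<open>The centralizer is the span of the independent class matrices\<close>

lemma centralizer_eq_on_tdist: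
  assumes "M \<in> centralizer m" "x \<in> verts m" "y \<in> verts m" "x' \<in> verts m" "y' \<in> verts m"
    "tdist (base m) x y = tdist (base m) x' y'"
  shows "M x y = M x' y'"
proof -
  obtain \<sigma> where "\<sigma> \<in> stab m" "\<sigma> x = x'" "\<sigma> y = y'"
    using stab_transitive_on_tdist[OF assms(2-6)] by blast
  moreover have "M (\<sigma> x) (\<sigma> y) = M x y"
    using assms(1-3) \<open>\<sigma> \<in> stab m\<close> unfolding centralizer_def by blast
  ultimately show ?thesis by simp
qed

lemma tdist_base_in_Iset: "x \<in> verts m \<Longrightarrow> y \<in> verts m \<Longrightarrow> tdist (base m) x y \<in> Iset m"
  using base_in_verts unfolding Iset_def by blast

lemma finite_Iset: "finite (Iset m)"
proof (rule finite_subset)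
  show "Iset m \<subseteq> {..m} \<times> {..m} \<times> {..m} \<times> {..m}"
  proof
    fix q assume "q \<in> Iset m"
    then obtain x y z where q: "q = tdist x y z" "x \<in> verts m" "y \<in> verts m" "z \<in> verts m"
      unfolding Iset_def by blast
    have "card (x \<inter> y) \<le> m" "card (x \<inter> z) \<le> m" "card (y \<inter> z) \<le> m" "card (x \<inter> y \<inter> z) \<le> m"
      using q vertsD by (metis card_mono inf_le1 order_trans)+
    then show "q \<in> {..m} \<times> {..m} \<times> {..m} \<times> {..m}" using q(1) by (simp add: tdist_def)
  qed
qed simp

lemma sum_Mq_at:
  assumes "x \<in> verts m" "y \<in> verts m"
  shows "(\<Sum>q\<in>Iset m. c q * Mq m q x y) = c (tdist (base m) x y)"
proof -
  have "(\<Sum>q\<in>Iset m. c q * Mq m q x y) = (\<Sum>q\<in>Iset m. if q = tdist (base m) x y then c q else 0)"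
    using assms by (intro sum.cong) (auto simp: Mq_def)
  also have "\<dots> = c (tdist (base m) x y)" using tdist_base_in_Iset[OF assms] finite_Iset by simp
  finally show ?thesis .
qed

lemma centralizer_subset_Aspan: "centralizer m \<subseteq> Aspan m"
proof
  fix M assume M: "M \<in> centralizer m"
  define rep where
    "rep q = (SOME r. fst r \<in> verts m \<and> snd r \<in> verts m \<and> tdist (base m) (fst r) (snd r) = q)" for q
  define c where "c q = M (fst (rep q)) (snd (rep q))" for q
  have "M x y = (\<Sum>q\<in>Iset m. c q * Mq m q x y)" for x y
  proof (cases "x \<in> verts m \<and> y \<in> verts m")
    case True
    let ?q = "tdist (base m) x y"
    have "fst (rep ?q) \<in> verts m \<and> snd (rep ?q) \<in> verts m \<and> tdist (base m) (fst (rep ?q)) (snd (rep ?q)) = ?q"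
      unfolding rep_def by (rule someI[of _ "(x, y)"]) (use True in auto)
    then have "M (fst (rep ?q)) (snd (rep ?q)) = M x y"
      using centralizer_eq_on_tdist[OF M, of "fst (rep ?q)" "snd (rep ?q)" x y] True by blast
    then show ?thesis using True sum_Mq_at[of x m y c] unfolding c_def by simp
  next
    case False
    then have "M x y = 0" using M unfolding centralizer_def is_mat_def by blast
    then show ?thesis using False by (auto simp: Mq_def)
  qed
  then show "M \<in> Aspan m" unfolding Aspan_def by blast
qed

lemma Mq_indep_holds: "Mq_indep m"
  unfolding Mq_indep_def
proof (intro allI impI ballI)
  fix c q assume vanish: "(\<lambda>x y. \<Sum>q\<in>Iset m. c q * Mq m q x y) = (\<lambda>x y. 0)" and "q \<in> Iset m"
  then obtain x y z where "q = tdist x y z" "x \<in> verts m" "y \<in> verts m" "z \<in> verts m"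
    unfolding Iset_def by blast
  then obtain y' z' where yz: "y' \<in> verts m" "z' \<in> verts m" "tdist (base m) y' z' = q"
    using tdist_realized_at_base by metis
  have "(\<Sum>q\<in>Iset m. c q * Mq m q y' z') = 0" using vanish by metis
  then show "c q = 0" using sum_Mq_at[OF yz(1,2)] yz(3) by simp
qed

lemma zero_in_terw: "(\<lambda>x y. 0) \<in> terw m"
  using terw.smul[OF terw.gen_A, where c=0 and m=m] by simp

lemma sum_in_terw:
  "finite S \<Longrightarrow> (\<And>q. q \<in> S \<Longrightarrow> F q \<in> terw m) \<Longrightarrow> (\<lambda>x y. \<Sum>q\<in>S. F q x y) \<in> terw m"
proof (induction S rule: finite_induct)
  case empty
  then show ?case using zero_in_terw by simp
next
  case (insert a S)
  then show ?case using terw.add[of "F a" m "\<lambda>x y. \<Sum>q\<in>S. F q x y"] by simp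
qed

lemma terw_cancel:
  assumes "N \<in> terw m" "R \<in> terw m" "a \<noteq> 0" "\<And>x y. N x y = a * M x y + R x y"
  shows "M \<in> terw m"
proof -
  have "M = (\<lambda>x y. inverse a * (N x y + (-1) * R x y))"
    using assms(3,4) by (intro ext) (simp add: field_simps)
  moreover have "(\<lambda>x y. inverse a * (N x y + (-1) * R x y)) \<in> terw m"
    by (rule terw.smul[OF terw.add[OF assms(1) terw.smul[OF assms(2)]]])
  ultimately show ?thesis by simp
qed

lemma Aspan_subset_terw:
  assumes "\<And>q. Mq m q \<in> terw m"
  shows "Aspan m \<subseteq> terw m"
proof
  fix M assume "M \<in> Aspan m"
  then obtain c where "M = (\<lambda>x y. \<Sum>q\<in>Iset m. c q * Mq m q x y)" unfolding Aspan_def by blast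
  then show "M \<in> terw m"
    using sum_in_terw[OF finite_Iset, where F="\<lambda>q x y. c q * Mq m q x y"] assms terw.smul by auto
qed

section \<open>Levels and the distance from the base vertex\<close>

definition level :: "nat \<Rightarrow> nat set \<Rightarrow> nat" where
  "level m x = card (base m \<inter> x)"

definition level_dist :: "nat \<Rightarrow> nat \<Rightarrow> nat" where
  "level_dist m a = min (2*(m-a)) (2*a+1)"

lemma level_le: "x \<in> verts m \<Longrightarrow> level m x \<le> m"
  unfolding level_def using card_mono[OF finite_base, of "base m \<inter> x"] by simp

lemma card_diff_base: "x \<in> verts m \<Longrightarrow> card (x - base m) = m - level m x"
  unfolding level_def using card_Int_Diff[of x "base m"] vertsD[of x m]
  by (simp add: Int_commute)

lemma level_eq_iff_base:
  assumes "x \<in> verts m"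
  shows "level m x = m \<longleftrightarrow> x = base m"
proof
  assume "level m x = m"
  then have "base m \<inter> x = base m"
    using card_seteq[of "base m" "base m \<inter> x"] unfolding level_def by simp
  then have "base m \<subseteq> x" by blast
  then show "x = base m" using card_seteq[of x "base m"] vertsD[OF assms] by simp
qed (simp add: level_def)

lemma adj_level_bounds:
  assumes "adj m x y"
  shows "level m x + level m y \<le> m" "m \<le> level m x + level m y + 1"
proof -
  have v: "x \<in> verts m" "y \<in> verts m" "x \<inter> y = {}" using assms adj_def by auto
  have "card (base m \<inter> x) + card (base m \<inter> y) = card ((base m \<inter> x) \<union> (base m \<inter> y))"
    using v(3) by (intro card_Un_disjoint[symmetric]) auto
  also have "\<dots> \<le> m" using card_mono[OF finite_base, of "(base m \<inter> x) \<union> (base m \<inter> y)"] by auto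
  finally show "level m x + level m y \<le> m" unfolding level_def .
  have "card (x - base m) + card (y - base m) = card ((x - base m) \<union> (y - base m))"
    using v vertsD by (intro card_Un_disjoint[symmetric]) auto
  also have "\<dots> \<le> card (ground m - base m)"
    using v vertsD by (intro card_mono) auto
  finally show "m \<le> level m x + level m y + 1"
    using card_diff_base v card_ground_diff_base level_le by simp
qed

lemma level_dist_le_walk: "walk m k (base m) x \<Longrightarrow> level_dist m (level m x) \<le> k"
proof (induction k "base m" x rule: walk.induct)
  case walk0
  then show ?case using level_eq_iff_base[OF base_in_verts] by (simp add: level_dist_def)
next
  case (walkS k y z)
  have "level m y \<le> m" "level m z \<le> m" using \<open>adj m y z\<close> adj_def level_le by auto
  then show ?case using adj_level_bounds[OF \<open>adj m y z\<close>] walkS unfolding level_dist_def by linarith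
qed

text \<open>The neighbour is \<open>ground m - x\<close> minus one point \<open>u\<close>; taking \<open>u\<close> inside or outside
  \<open>base m\<close> according to which term attains the minimum makes \<open>level_dist\<close> drop by one.\<close>

lemma exists_adj_closer_to_base:
  assumes xv: "x \<in> verts m" and d: "level_dist m (level m x) = Suc n"
  obtains y where "y \<in> verts m" "adj m y x" "level_dist m (level m y) = n"
proof -
  let ?a = "level m x"
  have a: "?a \<le> m" using level_le xv by blast
  have xs: "x \<subseteq> ground m" "card x = m" "finite x" using vertsD xv by auto
  obtain u where u: "u \<in> ground m - x" "u \<in> base m \<longleftrightarrow> 2*(m-?a) \<le> 2*?a+1"
  proof (cases "2*(m-?a) \<le> 2*?a+1")
    case True
    then have "x \<noteq> base m" using d level_eq_iff_base[OF base_in_verts] unfolding level_dist_def by auto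
    then have "\<not> base m \<subseteq> x" using card_seteq[of x "base m"] xs by auto
    then show ?thesis using that True base_subset_ground by blast
  next
    case False
    have "card ((ground m - base m) - x) = card (ground m - base m) - card ((ground m - base m) \<inter> x)"
      by (rule card_Diff_subset_Int) simp
    moreover have "(ground m - base m) \<inter> x = x - base m" using xs by blast
    ultimately have "card ((ground m - base m) - x) \<noteq> 0"
      using card_ground_diff_base card_diff_base[OF xv] a by simp
    then obtain u where "u \<in> (ground m - base m) - x" by (metis card.empty ex_in_conv)
    then show ?thesis using that False by blast
  qed
  define y where "y = (ground m - x) - {u}"
  have "card (ground m - x) = m + 1" using xs card_Diff_subset[of x "ground m"] by simp
  then have "card y = m" unfolding y_def using u(1) by (simp add: card_Diff_singleton)
  then have yv: "y \<in> verts m" unfolding y_def verts_def by auto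
  have "adj m y x" using yv xv unfolding adj_def y_def by blast
  have "base m \<inter> y = (base m - x) - {u}" using base_subset_ground unfolding y_def by blast
  moreover have "card (base m - x) = m - ?a"
    using card_Diff_subset_Int[of "base m" x] unfolding level_def by simp
  ultimately have "level m y = (m - ?a) - of_bool (u \<in> base m)"
    using u(1) unfolding level_def by (auto simp: card_Diff_singleton)
  then have "level_dist m (level m y) = n" using u(2) a d unfolding level_dist_def by auto
  with yv \<open>adj m y x\<close> show ?thesis by (rule that)
qed

lemma walk_level_dist: "x \<in> verts m \<Longrightarrow> walk m (level_dist m (level m x)) (base m) x"
proof (induction "level_dist m (level m x)" arbitrary: x)
  case 0
  then have "x = base m" using level_eq_iff_base level_le[OF 0(2)] unfolding level_dist_def by force
  then show ?case using 0 walk.walk0 by (simp add: level_dist_def level_def)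
next
  case (Suc n)
  then obtain y where y: "y \<in> verts m" "adj m y x" "level_dist m (level m y) = n"
    using exists_adj_closer_to_base by metis
  then have "walk m n (base m) y" using Suc(1) by blast
  then have "walk m (Suc n) (base m) x" by (rule walk.walkS[OF _ y(2)])
  then show ?case using Suc(2) by simp
qed

lemma gdist_base: "x \<in> verts m \<Longrightarrow> gdist m (base m) x = level_dist m (level m x)"
  unfolding gdist_def using walk_level_dist level_dist_le_walk by (intro Least_equality) auto

lemma level_dist_inj: "a \<le> m \<Longrightarrow> b \<le> m \<Longrightarrow> level_dist m a = level_dist m b \<Longrightarrow> a = b"
  unfolding level_dist_def min_def
  using double_not_eq_Suc_double[of "m - a" b] double_not_eq_Suc_double[of "m - b" a]
    Suc_double_not_eq_double[of a "m - b"] Suc_double_not_eq_double[of b "m - a"]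
  by (auto split: if_splits)

lemma level_dist_le: "level_dist m a \<le> m"
  unfolding level_dist_def by linarith

section \<open>Level projections and two-step walk matrices\<close>

definition level_proj :: "nat \<Rightarrow> nat \<Rightarrow> mat" where
  "level_proj m a = (\<lambda>x y. if x = y \<and> x \<in> verts m \<and> level m x = a then 1 else 0)"

lemma level_proj_in_terw: "a \<le> m \<Longrightarrow> level_proj m a \<in> terw m"
proof -
  assume a: "a \<le> m"
  have "level_proj m a = Estar m (level_dist m a)"
    unfolding level_proj_def Estar_def using gdist_base level_dist_inj level_le a by (intro ext) metis
  then show ?thesis using terw.gen_E[OF level_dist_le] by simp
qed

lemma mmul_level_proj_left:
  "mmul m (level_proj m a) M = (\<lambda>x y. if x \<in> verts m \<and> level m x = a then M x y else 0)"
proof (intro ext)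
  fix x y
  have "mmul m (level_proj m a) M x y
      = (\<Sum>z\<in>verts m. if z = x then (if x \<in> verts m \<and> level m x = a then M x y else 0) else 0)"
    unfolding mmul_def by (rule sum.cong) (auto simp: level_proj_def)
  then show "mmul m (level_proj m a) M x y = (if x \<in> verts m \<and> level m x = a then M x y else 0)"
    by simp
qed

lemma mmul_level_proj_right:
  "mmul m M (level_proj m a) = (\<lambda>x y. if y \<in> verts m \<and> level m y = a then M x y else 0)"
proof (intro ext)
  fix x y
  have "mmul m M (level_proj m a) x y
      = (\<Sum>z\<in>verts m. if z = y then (if y \<in> verts m \<and> level m y = a then M x y else 0) else 0)"
    unfolding mmul_def by (rule sum.cong) (auto simp: level_proj_def)
  then show "mmul m M (level_proj m a) x y = (if y \<in> verts m \<and> level m y = a then M x y else 0)"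
    by simp
qed

text \<open>Entry \<open>(w, y)\<close> counts the common neighbours \<open>z\<close> of level \<open>b\<close>, provided \<open>w\<close> has level \<open>c\<close>
  and \<open>y\<close> has level \<open>c'\<close>.\<close>

definition two_step :: "nat \<Rightarrow> nat \<Rightarrow> nat \<Rightarrow> nat \<Rightarrow> mat" where
  "two_step m c b c' = mmul m (mmul m (mmul m (level_proj m c) (A1 m)) (level_proj m b))
     (mmul m (A1 m) (level_proj m c'))"

lemma two_step_in_terw: "c \<le> m \<Longrightarrow> b \<le> m \<Longrightarrow> c' \<le> m \<Longrightarrow> two_step m c b c' \<in> terw m"
  unfolding two_step_def by (intro terw.mul terw.gen_A level_proj_in_terw)

lemma two_step_eq: "two_step m c b c' w y = (\<Sum>z\<in>verts m.
   (if w \<in> verts m \<and> level m w = c \<and> z \<in> verts m \<and> level m z = b \<and> adj m w z then 1 else 0) *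
   (if y \<in> verts m \<and> level m y = c' \<and> adj m z y then 1 else 0))"
  unfolding two_step_def mmul_level_proj_left mmul_level_proj_right
  unfolding mmul_def by (intro sum.cong) (auto simp: A1_def)

lemma two_step_nonzero_imp:
  assumes "two_step m c b c' w y \<noteq> 0"
  obtains z where "z \<in> verts m" "w \<in> verts m" "y \<in> verts m" "level m w = c" "level m z = b"
    "level m y = c'" "adj m w z" "adj m z y"
proof -
  obtain z where "z \<in> verts m"
    "(if w \<in> verts m \<and> level m w = c \<and> z \<in> verts m \<and> level m z = b \<and> adj m w z then 1 else 0) *
     (if y \<in> verts m \<and> level m y = c' \<and> adj m z y then 1 else 0) \<noteq> (0::complex)"
    using sum.not_neutral_contains_not_neutral[OF assms[unfolded two_step_eq]] .
  then show ?thesis by (intro that[of z]) (auto split: if_splits)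
qed

lemma complex_zero_less_one [simp]: "0 < (1::complex)" "0 \<le> (1::complex)"
  by (simp_all add: less_complex_def less_eq_complex_def)

definition nonneg_mat :: "mat \<Rightarrow> bool" where
  "nonneg_mat M \<longleftrightarrow> (\<forall>x y. 0 \<le> M x y)"

lemma nonneg_Mq: "nonneg_mat (Mq m q)"
  by (simp add: nonneg_mat_def Mq_def)

lemma nonneg_two_step: "nonneg_mat (two_step m c b c')"
  unfolding nonneg_mat_def two_step_eq by (auto intro!: sum_nonneg mult_nonneg_nonneg)

lemma two_step_pos:
  assumes "z \<in> verts m" "w \<in> verts m" "y \<in> verts m" "level m w = c" "level m z = b" "level m y = c'"
    "adj m w z" "adj m z y"
  shows "0 < two_step m c b c' w y"
  unfolding two_step_eq
  by (rule sum_pos2[OF finite_verts assms(1)]) (use assms in \<open>auto intro: mult_nonneg_nonneg\<close>)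

lemma mmul_nonzero_imp:
  assumes "mmul m M N x y \<noteq> 0"
  obtains w where "w \<in> verts m" "M x w \<noteq> 0" "N w y \<noteq> 0"
proof -
  obtain w where "w \<in> verts m" "M x w * N w y \<noteq> 0"
    using sum.not_neutral_contains_not_neutral[OF assms[unfolded mmul_def]] .
  then show ?thesis by (intro that[of w]) auto
qed

lemma mmul_pos:
  assumes "nonneg_mat M" "nonneg_mat N" "w \<in> verts m" "0 < M x w" "0 < N w y"
  shows "0 < mmul m M N x y"
  unfolding mmul_def
proof (rule sum_pos2[OF finite_verts assms(3)])
  show "0 < M x w * N w y" using assms(4,5) by (auto simp: less_complex_def)
  show "\<And>z. z \<in> verts m \<Longrightarrow> 0 \<le> M x z * N z y"
    using assms(1,2) nonneg_mat_def mult_nonneg_nonneg by blast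
qed

definition transpose_mat :: "mat \<Rightarrow> mat" where
  "transpose_mat M = (\<lambda>x y. M y x)"

lemma terw_transpose: "M \<in> terw m \<Longrightarrow> transpose_mat M \<in> terw m"
proof (induction rule: terw.induct)
  case gen_A
  have "transpose_mat (A1 m) = A1 m"
    unfolding transpose_mat_def A1_def adj_def by (intro ext) (auto simp: Int_commute)
  then show ?case using terw.gen_A by simp
next
  case (gen_E i)
  have "transpose_mat (Estar m i) = Estar m i" unfolding transpose_mat_def Estar_def by (intro ext) auto
  then show ?case using terw.gen_E[OF gen_E] by simp
next
  case (add M N)
  then show ?case using terw.add[OF add.IH] by (simp add: transpose_mat_def)
next
  case (smul M c)
  then show ?case using terw.smul[OF smul.IH] by (simp add: transpose_mat_def)
next
  case (mul M N)
  have "transpose_mat (mmul m M N) = mmul m (transpose_mat N) (transpose_mat M)"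
    unfolding transpose_mat_def mmul_def by (auto simp: mult.commute)
  then show ?case using terw.mul[OF mul.IH(2) mul.IH(1)] by simp
qed

lemma Mq_swap: "Mq m (j,i,t,p) = transpose_mat (Mq m (i,j,t,p))"
  unfolding transpose_mat_def Mq_def tdist_def by (intro ext) (auto simp: Int_commute Int_left_commute)

section \<open>Extracting a class matrix from a product\<close>

lemma Mq_in_terw_by_support:
  assumes N: "N \<in> terw m"
    and nonzero: "\<And>x y. x \<in> verts m \<Longrightarrow> y \<in> verts m \<Longrightarrow> tdist (base m) x y = q \<Longrightarrow> N x y \<noteq> 0"
    and others: "\<And>x y. x \<in> verts m \<Longrightarrow> y \<in> verts m \<Longrightarrow> N x y \<noteq> 0 \<Longrightarrow> tdist (base m) x y \<noteq> q
                 \<Longrightarrow> Mq m (tdist (base m) x y) \<in> terw m"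
  shows "Mq m q \<in> terw m"
proof (cases "\<exists>x y. x \<in> verts m \<and> y \<in> verts m \<and> tdist (base m) x y = q")
  case False
  then have "Mq m q = (\<lambda>x y. 0)" unfolding Mq_def by (intro ext) auto
  then show ?thesis using zero_in_terw by simp
next
  case True
  then obtain x0 y0 where xy0: "x0 \<in> verts m" "y0 \<in> verts m" "tdist (base m) x0 y0 = q" by blast
  have qI: "q \<in> Iset m" using tdist_base_in_Iset xy0 by blast
  obtain c where c: "N = (\<lambda>x y. \<Sum>q\<in>Iset m. c q * Mq m q x y)"
    using centralizer_subset_Aspan terw_subset_centralizer N unfolding Aspan_def by blast
  have cq: "c q \<noteq> 0" using nonzero[OF xy0] c sum_Mq_at[OF xy0(1,2)] xy0(3) by simp
  define S where "S = {q'\<in>Iset m. q' \<noteq> q \<and> c q' \<noteq> 0}"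
  have "Mq m q' \<in> terw m" if "q' \<in> S" for q'
  proof -
    have q': "q' \<in> Iset m" "q' \<noteq> q" "c q' \<noteq> 0" using that S_def by auto
    then obtain a b d where "q' = tdist a b d" "a \<in> verts m" "b \<in> verts m" "d \<in> verts m"
      unfolding Iset_def by blast
    then obtain x y where xy: "x \<in> verts m" "y \<in> verts m" "tdist (base m) x y = q'"
      using tdist_realized_at_base by metis
    have "N x y = c q'" using c sum_Mq_at[OF xy(1,2)] xy(3) by simp
    then show ?thesis using others[OF xy(1,2)] xy(3) q' by simp
  qed
  moreover have "finite S" using finite_Iset S_def by simp
  ultimately have rest: "(\<lambda>x y. \<Sum>q'\<in>S. c q' * Mq m q' x y) \<in> terw m"
    using sum_in_terw[where F="\<lambda>q' x y. c q' * Mq m q' x y"] terw.smul by blast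
  have "N x y = c q * Mq m q x y + (\<Sum>q'\<in>S. c q' * Mq m q' x y)" for x y
  proof -
    have "N x y = c q * Mq m q x y + (\<Sum>q'\<in>Iset m - {q}. c q' * Mq m q' x y)"
      using c sum.remove[OF finite_Iset qI, of "\<lambda>q'. c q' * Mq m q' x y"] by simp
    also have "(\<Sum>q'\<in>Iset m - {q}. c q' * Mq m q' x y) = (\<Sum>q'\<in>S. c q' * Mq m q' x y)"
      by (rule sum.mono_neutral_right) (auto simp: S_def finite_Iset)
    finally show ?thesis .
  qed
  then show ?thesis by (rule terw_cancel[OF N rest cq])
qed

lemma Mq_in_terw_by_product:
  assumes "Mq m q' \<in> terw m" "W \<in> terw m" "nonneg_mat W"
    and reach: "\<And>x y. x \<in> verts m \<Longrightarrow> y \<in> verts m \<Longrightarrow> tdist (base m) x y = q \<Longrightarrow>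
      \<exists>w\<in>verts m. tdist (base m) x w = q' \<and> 0 < W w y"
    and others: "\<And>x w y. x \<in> verts m \<Longrightarrow> w \<in> verts m \<Longrightarrow> y \<in> verts m \<Longrightarrow>
      tdist (base m) x w = q' \<Longrightarrow> W w y \<noteq> 0 \<Longrightarrow> tdist (base m) x y \<noteq> q \<Longrightarrow>
      Mq m (tdist (base m) x y) \<in> terw m"
  shows "Mq m q \<in> terw m"
proof (rule Mq_in_terw_by_support[OF terw.mul[OF assms(1,2)]])
  fix x y assume xy: "x \<in> verts m" "y \<in> verts m" "tdist (base m) x y = q"
  then obtain w where "w \<in> verts m" "tdist (base m) x w = q'" "0 < W w y" using reach by blast
  then have "0 < mmul m (Mq m q') W x y"
    using mmul_pos[OF nonneg_Mq assms(3)] xy by (simp add: Mq_def)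
  then show "mmul m (Mq m q') W x y \<noteq> 0" by auto
next
  fix x y assume xy: "x \<in> verts m" "y \<in> verts m" "mmul m (Mq m q') W x y \<noteq> 0"
    "tdist (base m) x y \<noteq> q"
  obtain w where "w \<in> verts m" "Mq m q' x w \<noteq> 0" "W w y \<noteq> 0"
    using xy(3) by (rule mmul_nonzero_imp)
  then show "Mq m (tdist (base m) x y) \<in> terw m"
    using others xy by (auto simp: Mq_def split: if_splits)
qed

section \<open>Exchanging one point along a two-step walk\<close>

definition base_meet :: "nat \<Rightarrow> nat set \<Rightarrow> nat set \<Rightarrow> nat" where
  "base_meet m x y = card (base m \<inter> x \<inter> y)"

definition outer_meet :: "nat \<Rightarrow> nat set \<Rightarrow> nat set \<Rightarrow> nat" where
  "outer_meet m x y = card (x \<inter> y - base m)"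

lemma tdist_base_split:
  assumes "x \<in> verts m" "y \<in> verts m"
  shows "tdist (base m) x y = (level m x, level m y, base_meet m x y + outer_meet m x y, base_meet m x y)"
proof -
  have "card (x \<inter> y) = card (x \<inter> y \<inter> base m) + card (x \<inter> y - base m)"
    using assms vertsD by (intro card_Int_Diff) blast
  moreover have "x \<inter> y \<inter> base m = base m \<inter> x \<inter> y" by blast
  ultimately show ?thesis unfolding tdist_def level_def base_meet_def outer_meet_def by simp
qed

lemma meet_bounds:
  assumes "x \<in> verts m" "y \<in> verts m"
  shows "base_meet m x y \<le> level m x" "base_meet m x y \<le> level m y"
    "outer_meet m x y \<le> m - level m x" "outer_meet m x y \<le> m - level m y"
proof -
  have f: "finite x" "finite y" using assms vertsD by auto
  show "base_meet m x y \<le> level m x" "base_meet m x y \<le> level m y"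
    unfolding base_meet_def level_def using f by (intro card_mono; auto)+
  show "outer_meet m x y \<le> m - level m x" "outer_meet m x y \<le> m - level m y"
    unfolding outer_meet_def using card_diff_base assms f
    by (metis card_mono finite_Diff Diff_mono inf_le1 inf_le2 order_refl)+
qed

lemma level_lt_of_base_meet_lt:
  assumes "x \<in> verts m" "y \<in> verts m" "base_meet m x y < level m x"
  shows "level m y < m"
proof (rule ccontr)
  assume "\<not> level m y < m"
  then have "y = base m" using level_le[OF assms(2)] level_eq_iff_base[OF assms(2)] by simp
  moreover have "base m \<inter> x \<inter> base m = base m \<inter> x" by blast
  ultimately show False using assms(3) unfolding base_meet_def level_def by simp
qed

text \<open>Trading a point \<open>u \<in> y - x\<close> for a point \<open>v \<in> x - y\<close> gives a vertex \<open>w\<close> at distance two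
  from \<open>y\<close>, through the complement \<open>z\<close> of \<open>y \<union> {v}\<close>.\<close>

lemma exchange_point:
  assumes xv: "x \<in> verts m" and yv: "y \<in> verts m" and u: "u \<in> y" "u \<notin> x" and v: "v \<in> x" "v \<notin> y"
  defines "w \<equiv> insert v (y - {u})" and "z \<equiv> ground m - insert v y"
  shows "w \<in> verts m" "z \<in> verts m" "adj m w z" "adj m z y"
    "level m w + of_bool (u \<in> base m) = level m y + of_bool (v \<in> base m)"
    "card (x \<inter> w) = card (x \<inter> y) + 1"
    "base_meet m x w = base_meet m x y + of_bool (v \<in> base m)"
    "level m z + level m y + of_bool (v \<in> base m) = m"
proof -
  have ys: "y \<subseteq> ground m" "card y = m" "finite y" using vertsD[OF yv] by auto
  have xs: "x \<subseteq> ground m" "finite x" using vertsD[OF xv] by auto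
  have vG: "v \<in> ground m" using v xs by blast
  have "0 < m" using u ys card_gt_0_iff by blast
  moreover have "card (y - {u}) = m - 1" using u ys by (simp add: card_Diff_singleton)
  ultimately have "card w = m" unfolding w_def using v ys by (simp add: card_insert_if)
  moreover have "w \<subseteq> ground m" unfolding w_def using vG ys by blast
  ultimately show wv: "w \<in> verts m" by (simp add: verts_def)
  have "card (insert v y) = m + 1" "insert v y \<subseteq> ground m" using v vG ys by auto
  then have "card z = m" unfolding z_def using card_Diff_subset[of "insert v y" "ground m"] ys(3) by simp
  then show zv: "z \<in> verts m" unfolding z_def verts_def by auto
  show "adj m w z" using wv zv unfolding adj_def w_def z_def by blast
  show "adj m z y" using yv zv unfolding adj_def z_def by blast
  have "card (base m \<inter> y - {u}) + of_bool (u \<in> base m) = card (base m \<inter> y)"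
    using u card.remove[of "base m \<inter> y" u] by (cases "u \<in> base m") auto
  moreover have "base m \<inter> w = (if v \<in> base m then insert v (base m \<inter> y - {u}) else base m \<inter> y - {u})"
    unfolding w_def by auto
  ultimately show "level m w + of_bool (u \<in> base m) = level m y + of_bool (v \<in> base m)"
    unfolding level_def using v by auto
  have "x \<inter> w = insert v (x \<inter> y)" unfolding w_def using u v by auto
  then show "card (x \<inter> w) = card (x \<inter> y) + 1" using v xs by simp
  have "base m \<inter> x \<inter> w = (if v \<in> base m then insert v (base m \<inter> x \<inter> y) else base m \<inter> x \<inter> y)"
    unfolding w_def using u v by auto
  then show "base_meet m x w = base_meet m x y + of_bool (v \<in> base m)"
    unfolding base_meet_def using v by auto
  have "base m \<inter> z = base m - (base m \<inter> insert v y)" unfolding z_def using base_subset_ground by blast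
  moreover have "card (base m \<inter> insert v y) = level m y + of_bool (v \<in> base m)"
    unfolding level_def using v by (auto simp: Int_insert_right)
  moreover have "card (base m \<inter> insert v y) \<le> m"
    using card_mono[OF finite_base, of "base m \<inter> insert v y"] by simp
  ultimately show "level m z + level m y + of_bool (v \<in> base m) = m"
    unfolding level_def[of m z] by (simp add: card_Diff_subset)
qed

lemma two_step_union_bounds:
  assumes "w \<in> verts m" "y \<in> verts m" "z \<in> verts m" "adj m w z" "adj m z y"
  shows "card (base m \<inter> (w \<union> y)) + level m z \<le> m" "card ((w \<union> y) - base m) \<le> level m z + 1"
proof -
  have d: "z \<inter> w = {}" "z \<inter> y = {}" using assms adj_def by auto
  have f: "finite w" "finite y" "finite z" using assms vertsD by auto
  have "card (base m \<inter> (w \<union> y)) + card (base m \<inter> z) = card ((base m \<inter> (w \<union> y)) \<union> (base m \<inter> z))"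
    using d f by (intro card_Un_disjoint[symmetric]) auto
  also have "\<dots> \<le> m" using card_mono[OF finite_base, of "(base m \<inter> (w \<union> y)) \<union> (base m \<inter> z)"] by auto
  finally show "card (base m \<inter> (w \<union> y)) + level m z \<le> m" unfolding level_def .
  have "card ((w \<union> y) - base m) + card (z - base m) = card (((w \<union> y) - base m) \<union> (z - base m))"
    using d f by (intro card_Un_disjoint[symmetric]) auto
  also have "\<dots> \<le> card (ground m - base m)" using assms vertsD by (intro card_mono) auto
  finally show "card ((w \<union> y) - base m) \<le> level m z + 1"
    using card_diff_base[OF assms(3)] card_ground_diff_base[of m] level_le[OF assms(3)] by linarith
qed

text \<open>If the middle vertex has the complementary level, then \<open>w\<close> and \<open>y\<close> agree inside
  \<open>base m\<close> and differ in at most one point outside it.\<close>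

lemma two_step_same_base_part:
  assumes xv: "x \<in> verts m" and W: "two_step m j (m - j) j w y \<noteq> 0"
  shows "base_meet m x y = base_meet m x w" "card (x \<inter> w) \<le> card (x \<inter> y) + 1"
proof -
  obtain z where zv: "z \<in> verts m" and wv: "w \<in> verts m" and yv: "y \<in> verts m"
    and lj: "level m w = j" "level m z = m - j" "level m y = j" and a: "adj m w z" "adj m z y"
    by (rule two_step_nonzero_imp[OF W])
  have l: "level m w = level m y" "level m z + level m y = m" using lj level_le[OF yv] by auto
  note b = two_step_union_bounds[OF wv yv zv a]
  have f: "finite w" "finite y" "finite x" "card y = m" using vertsD xv wv yv by auto
  have "base m \<inter> y = base m \<inter> (w \<union> y)"
    by (rule card_seteq) (use b l f in \<open>auto simp: level_def\<close>)
  moreover have "base m \<inter> w = base m \<inter> (w \<union> y)"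
    by (rule card_seteq) (use b l f in \<open>auto simp: level_def\<close>)
  ultimately have "base m \<inter> x \<inter> y = base m \<inter> x \<inter> w" by blast
  then show "base_meet m x y = base_meet m x w" unfolding base_meet_def by simp
  have "card ((w - y) \<union> y) = card (w - y) + card y"
    by (rule card_Un_disjoint) (use f in auto)
  then have "card (w \<union> y) = card (w - y) + m" using f by simp
  moreover have "card (w \<union> y) = card (base m \<inter> (w \<union> y)) + card ((w \<union> y) - base m)"
    using card_Int_Diff[of "w \<union> y" "base m"] f by (simp add: Int_commute)
  ultimately have "card (w - y) \<le> 1" using b l by linarith
  have "card (x \<inter> w) \<le> card ((x \<inter> y) \<union> (w - y))" using f by (intro card_mono) auto
  also have "\<dots> \<le> card (x \<inter> y) + card (w - y)" by (rule card_Un_le)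
  finally show "card (x \<inter> w) \<le> card (x \<inter> y) + 1" using \<open>card (w - y) \<le> 1\<close> by linarith
qed

text \<open>If the middle vertex has one less than the complementary level, then \<open>w\<close> and \<open>y\<close> agree
  outside \<open>base m\<close> and differ in at most one point inside it.\<close>

lemma two_step_same_outer_part:
  assumes xv: "x \<in> verts m" and W: "two_step m j (m - j - 1) j w y \<noteq> 0" and j: "j < m"
  shows "outer_meet m x y = outer_meet m x w" "base_meet m x w \<le> base_meet m x y + 1"
proof -
  obtain z where zv: "z \<in> verts m" and wv: "w \<in> verts m" and yv: "y \<in> verts m"
    and lj: "level m w = j" "level m z = m - j - 1" "level m y = j" and a: "adj m w z" "adj m z y"
    by (rule two_step_nonzero_imp[OF W])
  have l: "level m w = level m y" "level m z + level m y + 1 = m" using lj j by auto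
  note b = two_step_union_bounds[OF wv yv zv a]
  have f: "finite w" "finite y" "finite x" using vertsD xv wv yv by auto
  have "y - base m = (w \<union> y) - base m"
    by (rule card_seteq) (use b l f card_diff_base[OF yv] level_le[OF yv] in auto)
  moreover have "w - base m = (w \<union> y) - base m"
    by (rule card_seteq) (use b l f card_diff_base[OF wv] level_le[OF yv] in auto)
  ultimately have "(x \<inter> y) - base m = (x \<inter> w) - base m" by blast
  then show "outer_meet m x y = outer_meet m x w" unfolding outer_meet_def by simp
  have "base m \<inter> (w \<union> y) = (base m \<inter> y) \<union> (base m \<inter> w - y)" by blast
  moreover have "card ((base m \<inter> y) \<union> (base m \<inter> w - y)) = card (base m \<inter> y) + card (base m \<inter> w - y)"
    by (rule card_Un_disjoint) auto
  ultimately have "card (base m \<inter> (w \<union> y)) = card (base m \<inter> y) + card (base m \<inter> w - y)" by simp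
  then have c1: "card (base m \<inter> w - y) \<le> 1" using b l unfolding level_def by linarith
  have "card (base m \<inter> x \<inter> w) \<le> card ((base m \<inter> x \<inter> y) \<union> (base m \<inter> w - y))" by (intro card_mono) auto
  also have "\<dots> \<le> card (base m \<inter> x \<inter> y) + card (base m \<inter> w - y)" by (rule card_Un_le)
  finally show "base_meet m x w \<le> base_meet m x y + 1" using c1 unfolding base_meet_def by linarith
qed

lemma two_step_level_up:
  assumes W: "two_step m n (m - Suc n) (Suc n) w y \<noteq> 0" and n: "n < m"
  shows "base m \<inter> w \<subseteq> y" "y - base m \<subseteq> w"
proof -
  obtain z where zv: "z \<in> verts m" and wv: "w \<in> verts m" and yv: "y \<in> verts m"
    and ln: "level m w = n" "level m z = m - Suc n" "level m y = Suc n" and a: "adj m w z" "adj m z y"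
    by (rule two_step_nonzero_imp[OF W])
  have l: "level m y = level m w + 1" "level m z + level m y = m" using ln n by auto
  note b = two_step_union_bounds[OF wv yv zv a]
  have f: "finite w" "finite y" using vertsD wv yv by auto
  have "base m \<inter> y = base m \<inter> (w \<union> y)"
    by (rule card_seteq) (use b l f in \<open>auto simp: level_def\<close>)
  then show "base m \<inter> w \<subseteq> y" by blast
  have "w - base m = (w \<union> y) - base m"
    by (rule card_seteq) (use b l f card_diff_base[OF wv] in auto)
  then show "y - base m \<subseteq> w" by blast
qed

section \<open>Every class matrix lies in the Terwilliger algebra\<close>

text \<open>For levels \<open>i \<le> j\<close> the class \<open>(i, j, i + (m - j), i)\<close> consists of the pairs of maximal
  overlap: \<open>base m \<inter> x \<subseteq> y\<close> and \<open>y - base m \<subseteq> x\<close>.\<close>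

lemma Mq_extremal_eq_level_proj: "i \<le> m \<Longrightarrow> Mq m (i, i, i + (m - i), i) = level_proj m i"
proof (intro ext)
  fix x y assume i: "i \<le> m"
  show "Mq m (i, i, i + (m - i), i) x y = level_proj m i x y"
  proof (cases "x \<in> verts m \<and> y \<in> verts m")
    case True
    have f: "finite x" "finite y" "card x = m" "card y = m" using True vertsD by auto
    have "tdist (base m) x y = (i, i, m, i) \<longleftrightarrow> x = y \<and> level m x = i"
    proof
      assume "tdist (base m) x y = (i, i, m, i)"
      then have c: "card (x \<inter> y) = m" "level m x = i" unfolding tdist_def level_def by auto
      have "x \<inter> y = x" by (rule card_seteq) (use f c in auto)
      moreover have "x \<inter> y = y" by (rule card_seteq) (use f c in auto)
      ultimately show "x = y \<and> level m x = i" using c by auto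
    qed (use f in \<open>auto simp: tdist_def level_def\<close>)
    then show ?thesis using True i unfolding Mq_def level_proj_def by auto
  qed (auto simp: Mq_def level_proj_def)
qed

lemma tdist_two_step_level_up:
  assumes xv: "x \<in> verts m" and tw: "tdist (base m) x w = (i, n, i + (m - n), i)"
    and W: "two_step m n (m - Suc n) (Suc n) w y \<noteq> 0" and n: "n < m"
  shows "tdist (base m) x y = (i, Suc n, i + (m - Suc n), i)"
proof -
  obtain wv: "w \<in> verts m" and yv: "y \<in> verts m" and l: "level m w = n" "level m y = Suc n"
    using two_step_nonzero_imp[OF W] by metis
  note up = two_step_level_up[OF W n]
  have tw': "level m x = i" "base_meet m x w = i" "outer_meet m x w = m - n"
    using tw tdist_base_split[OF xv wv] by auto
  have fx: "finite x" "finite y" "finite w" using xv yv wv vertsD by auto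
  have "base m \<inter> x \<inter> w = base m \<inter> x"
    by (rule card_seteq) (use tw' fx in \<open>auto simp: base_meet_def level_def\<close>)
  then have "base m \<inter> x \<inter> y = base m \<inter> x" using up by blast
  then have "base_meet m x y = i" using tw' unfolding base_meet_def level_def by simp
  moreover have "(x \<inter> w) - base m = w - base m"
    by (rule card_seteq) (use tw' fx card_diff_base[OF wv] l in \<open>auto simp: outer_meet_def\<close>)
  then have "(x \<inter> y) - base m = y - base m" using up by blast
  then have "outer_meet m x y = m - Suc n" using card_diff_base[OF yv] l unfolding outer_meet_def by simp
  ultimately show ?thesis using tdist_base_split[OF xv yv] tw' l by simp
qed

lemma Mq_extremal_in_terw:
  assumes "i \<le> j" "j \<le> m"
  shows "Mq m (i, j, i + (m - j), i) \<in> terw m"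
  using assms
proof (induction j rule: dec_induct)
  case base
  then show ?case using Mq_extremal_eq_level_proj level_proj_in_terw by simp
next
  case (step n)
  let ?q' = "(i, n, i + (m - n), i)" and ?q = "(i, Suc n, i + (m - Suc n), i)"
  show ?case
  proof (rule Mq_in_terw_by_product[OF _ two_step_in_terw nonneg_two_step])
    show "Mq m ?q' \<in> terw m" using step by simp
  next
    fix x y assume xv: "x \<in> verts m" and yv: "y \<in> verts m" and t: "tdist (base m) x y = ?q"
    have t': "level m x = i" "level m y = Suc n" "base_meet m x y = i" "outer_meet m x y = m - Suc n"
      "card (x \<inter> y) = i + (m - Suc n)"
      using t tdist_base_split[OF xv yv] by (auto simp: tdist_def)
    have "base m \<inter> x \<inter> y \<noteq> base m \<inter> y" "x \<inter> y - base m \<noteq> x - base m"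
      using t' card_diff_base[OF xv] step unfolding base_meet_def level_def outer_meet_def by auto
    then obtain u v where u: "u \<in> base m" "u \<in> y" "u \<notin> x" and v: "v \<notin> base m" "v \<in> x" "v \<notin> y"
      by blast
    note ex = exchange_point[OF xv yv u(2,3) v(2,3)]
    have "tdist (base m) x (insert v (y - {u})) = ?q'"
      using ex(5-7) u v t' step unfolding tdist_def level_def base_meet_def by simp
    moreover have "0 < two_step m n (m - Suc n) (Suc n) (insert v (y - {u})) y"
      by (rule two_step_pos[OF ex(2,1) yv]) (use ex u v t' in simp_all)
    ultimately show "\<exists>w\<in>verts m. tdist (base m) x w = ?q' \<and> 0 < two_step m n (m - Suc n) (Suc n) w y"
      using ex(1) by blast
  next
    fix x w y assume "x \<in> verts m" "tdist (base m) x w = ?q'"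
      "two_step m n (m - Suc n) (Suc n) w y \<noteq> 0" "tdist (base m) x y \<noteq> ?q"
    then show "Mq m (tdist (base m) x y) \<in> terw m"
      using tdist_two_step_level_up step by simp
  qed (use step in simp_all)
qed

text \<open>The induction measure: how far the parts \<open>p\<close> and \<open>t - p\<close> of \<open>x \<inter> y\<close> inside and outside
  \<open>base m\<close> are from their maxima given the levels \<open>i\<close> and \<open>j\<close>.\<close>

definition overlap_defect :: "nat \<Rightarrow> nat \<times> nat \<times> nat \<times> nat \<Rightarrow> nat" where
  "overlap_defect m q = (case q of (i,j,t,p) \<Rightarrow> (min i j - p) + (min (m-i) (m-j) - (t - p)))"

lemma overlap_defect_split:
  "overlap_defect m (i, j, p + s, p) = (min i j - p) + (min (m-i) (m-j) - s)"
  by (simp add: overlap_defect_def)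

lemma Mq_in_terw_raise_outer:
  assumes IH: "\<And>q'. overlap_defect m q' < overlap_defect m (i, j, p + s, p) \<Longrightarrow> Mq m q' \<in> terw m"
    and s: "s < m - i" "s < m - j"
  shows "Mq m (i, j, p + s, p) \<in> terw m"
proof (rule Mq_in_terw_by_product[OF IH two_step_in_terw nonneg_two_step])
  have "overlap_defect m (i, j, p + s + 1, p) = (min i j - p) + (min (m - i) (m - j) - (s + 1))"
    by (simp add: overlap_defect_def)
  moreover have "s < min (m - i) (m - j)" using s by simp
  ultimately show "overlap_defect m (i, j, p + s + 1, p) < overlap_defect m (i, j, p + s, p)"
    using overlap_defect_split[of m i j p s] by linarith
next
  fix x y assume xv: "x \<in> verts m" and yv: "y \<in> verts m" and t: "tdist (base m) x y = (i, j, p + s, p)"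
  have t': "level m x = i" "level m y = j" "base_meet m x y = p" "outer_meet m x y = s"
    "card (x \<inter> y) = p + s"
    using t tdist_base_split[OF xv yv] by (auto simp: tdist_def)
  have "x \<inter> y - base m \<noteq> y - base m" "x \<inter> y - base m \<noteq> x - base m"
    using card_diff_base[OF xv] card_diff_base[OF yv] t' s unfolding outer_meet_def by auto
  then obtain u v where u: "u \<in> y" "u \<notin> x" "u \<notin> base m" and v: "v \<in> x" "v \<notin> y" "v \<notin> base m"
    by blast
  note ex = exchange_point[OF xv yv u(1,2) v(1,2)]
  have "tdist (base m) x (insert v (y - {u})) = (i, j, p + s + 1, p)"
    using ex(5-7) u v t' unfolding tdist_def level_def base_meet_def by simp
  moreover have "0 < two_step m j (m - j) j (insert v (y - {u})) y"
    by (rule two_step_pos[OF ex(2,1) yv]) (use ex u v t' in simp_all)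
  ultimately show "\<exists>w\<in>verts m. tdist (base m) x w = (i, j, p + s + 1, p) \<and> 0 < two_step m j (m - j) j w y"
    using ex(1) by blast
next
  fix x w y assume xv: "x \<in> verts m" and tw: "tdist (base m) x w = (i, j, p + s + 1, p)"
    and W: "two_step m j (m - j) j w y \<noteq> 0" and ne: "tdist (base m) x y \<noteq> (i, j, p + s, p)"
  obtain yv: "y \<in> verts m" and l: "level m y = j" using two_step_nonzero_imp[OF W] by metis
  have tw': "level m x = i" "base_meet m x w = p" "card (x \<inter> w) = p + s + 1"
    using tw by (auto simp: tdist_def level_def base_meet_def)
  have "base_meet m x y = p" "p + s \<le> card (x \<inter> y)"
    using two_step_same_base_part[OF xv W] tw' by auto
  moreover have e: "tdist (base m) x y = (i, j, p + outer_meet m x y, p)"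
    using tdist_base_split[OF xv yv] tw' l \<open>base_meet m x y = p\<close> by simp
  ultimately have "s < outer_meet m x y" using ne by (auto simp: tdist_def)
  moreover have "outer_meet m x y \<le> min (m - i) (m - j)"
    using meet_bounds[OF xv yv] tw' l by auto
  ultimately have "overlap_defect m (tdist (base m) x y) < overlap_defect m (i, j, p + s, p)"
    unfolding e overlap_defect_split by linarith
  then show "Mq m (tdist (base m) x y) \<in> terw m" by (rule IH)
qed (use s in simp_all)

lemma Mq_in_terw_raise_base:
  assumes IH: "\<And>q'. overlap_defect m q' < overlap_defect m (i, j, p + s, p) \<Longrightarrow> Mq m q' \<in> terw m"
    and p: "p < i" "p < j" and j: "j < m"
  shows "Mq m (i, j, p + s, p) \<in> terw m"
proof (rule Mq_in_terw_by_product[OF IH two_step_in_terw nonneg_two_step])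
  have "overlap_defect m (i, j, p + s + 1, p + 1) = (min i j - (p + 1)) + (min (m - i) (m - j) - s)"
    by (simp add: overlap_defect_def)
  moreover have "p < min i j" using p by simp
  ultimately show "overlap_defect m (i, j, p + s + 1, p + 1) < overlap_defect m (i, j, p + s, p)"
    using overlap_defect_split[of m i j p s] by linarith
next
  fix x y assume xv: "x \<in> verts m" and yv: "y \<in> verts m" and t: "tdist (base m) x y = (i, j, p + s, p)"
  have t': "level m x = i" "level m y = j" "base_meet m x y = p" "card (x \<inter> y) = p + s"
    using t by (auto simp: tdist_def level_def base_meet_def)
  have "base m \<inter> x \<inter> y \<noteq> base m \<inter> y" "base m \<inter> x \<inter> y \<noteq> base m \<inter> x"
    using t' p unfolding base_meet_def level_def by auto
  then obtain u v where u: "u \<in> y" "u \<notin> x" "u \<in> base m" and v: "v \<in> x" "v \<notin> y" "v \<in> base m"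
    by blast
  note ex = exchange_point[OF xv yv u(1,2) v(1,2)]
  have "tdist (base m) x (insert v (y - {u})) = (i, j, p + s + 1, p + 1)"
    using ex(5-7) u v t' unfolding tdist_def level_def base_meet_def by simp
  moreover have "0 < two_step m j (m - j - 1) j (insert v (y - {u})) y"
    by (rule two_step_pos[OF ex(2,1) yv]) (use ex u v t' in simp_all)
  ultimately show "\<exists>w\<in>verts m. tdist (base m) x w = (i, j, p + s + 1, p + 1)
      \<and> 0 < two_step m j (m - j - 1) j w y"
    using ex(1) by blast
next
  fix x w y assume xv: "x \<in> verts m" and tw: "tdist (base m) x w = (i, j, p + s + 1, p + 1)"
    and W: "two_step m j (m - j - 1) j w y \<noteq> 0" and ne: "tdist (base m) x y \<noteq> (i, j, p + s, p)"
  obtain wv: "w \<in> verts m" and yv: "y \<in> verts m" and l: "level m y = j"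
    using two_step_nonzero_imp[OF W] by metis
  have tw': "level m x = i" "base_meet m x w = p + 1" "outer_meet m x w = s"
    using tw tdist_base_split[OF xv wv] by auto
  have "outer_meet m x y = s" "p \<le> base_meet m x y"
    using two_step_same_outer_part[OF xv W j] tw' by auto
  moreover have e: "tdist (base m) x y = (i, j, base_meet m x y + s, base_meet m x y)"
    using tdist_base_split[OF xv yv] tw' l \<open>outer_meet m x y = s\<close> by simp
  ultimately have "p < base_meet m x y" using ne by (auto simp: le_less)
  moreover have "base_meet m x y \<le> min i j" using meet_bounds[OF xv yv] tw' l by auto
  ultimately have "overlap_defect m (tdist (base m) x y) < overlap_defect m (i, j, p + s, p)"
    unfolding e overlap_defect_split by linarith
  then show "Mq m (tdist (base m) x y) \<in> terw m" by (rule IH)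
qed (use j in simp_all)

lemma Mq_in_terw_of_smaller_defect:
  assumes IH: "\<And>q'. overlap_defect m q' < overlap_defect m (i, j, p + s, p) \<Longrightarrow> Mq m q' \<in> terw m"
    and xv: "x \<in> verts m" and yv: "y \<in> verts m" and t: "tdist (base m) x y = (i, j, p + s, p)"
  shows "Mq m (i, j, p + s, p) \<in> terw m"
proof -
  have lev: "i = level m x" "j = level m y" and p: "p = base_meet m x y" and s: "s = outer_meet m x y"
    using t tdist_base_split[OF xv yv] by auto
  have bounds: "p \<le> i" "p \<le> j" "s \<le> m - i" "s \<le> m - j" "i \<le> m" "j \<le> m"
    using meet_bounds[OF xv yv] level_le xv yv unfolding lev p s by auto
  show ?thesis
  proof (cases "s < m - i \<and> s < m - j")
    case True
    then show ?thesis using Mq_in_terw_raise_outer[OF IH] by simp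
  next
    case outer_max: False
    show ?thesis
    proof (cases "p < i \<and> p < j")
      case True
      then have "j < m" using level_lt_of_base_meet_lt[OF xv yv] unfolding lev p by blast
      then show ?thesis using Mq_in_terw_raise_base[OF IH] True by simp
    next
      case False
      show ?thesis
      proof (cases "i \<le> j")
        case True
        then have "p = i" "s = m - j" using False outer_max bounds by linarith+
        then show ?thesis using Mq_extremal_in_terw True bounds by simp
      next
        case i_gt_j: False
        then have "p = j" "s = m - i" using False outer_max bounds by linarith+
        then show ?thesis
          using terw_transpose[OF Mq_extremal_in_terw[of j i m]] Mq_swap[of m i j "j + (m - i)" j]
            i_gt_j bounds by simp
      qed
    qed
  qed
qed

lemma Mq_in_terw: "Mq m q \<in> terw m"
proof (induction "overlap_defect m q" arbitrary: q rule: less_induct)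
  case less
  show ?case
  proof (cases "\<exists>x y. x \<in> verts m \<and> y \<in> verts m \<and> tdist (base m) x y = q")
    case False
    then have "Mq m q = (\<lambda>x y. 0)" unfolding Mq_def by (intro ext) auto
    then show ?thesis using zero_in_terw by simp
  next
    case True
    then obtain x y where xv: "x \<in> verts m" and yv: "y \<in> verts m" and t: "tdist (base m) x y = q" by blast
    then have "q = (level m x, level m y, base_meet m x y + outer_meet m x y, base_meet m x y)"
      using tdist_base_split by simp
    then show ?thesis using Mq_in_terw_of_smaller_defect less xv yv t by simp
  qed
qed

theorem theorem3p8:
  fixes m :: nat
  assumes "0 < m"
  shows "Aspan m = terw m \<and> Mq_indep m \<and> terw m = centralizer m"
  using Aspan_subset_terw[OF Mq_in_terw] terw_subset_centralizer centralizer_subset_Aspan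
    Mq_indep_holds by blast

end
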